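(* Let $T\in\mathbb{T}$. Then no non-pendant edge of $T$ belongs to a maximum matching of $T$.
   Context: $\mathbb{T}$ is the class of simple undirected weighted trees $T$ (nonzero real weights on edges) such that (i) $T$ has at least one non-pendant vertex, and (ii) every non-pendant vertex of $T$ is adjacent to at least one pendant vertex. A pendant vertex is a vertex of degree one; a pendant edge is an edge incident to a pendant vertex; a non-pendant edge is any other edge. A maximum matching is a set of pairwise vertex-disjoint edges of maximum cardinality. *)

theory Defs
  imports Complex_Main
begin

definition simple_graph :: "'a set \<Rightarrow> 'a set set \<Rightarrow> bool" where
  "simple_graph V E \<longleftrightarrow> finite V \<and> (\<forall>e\<in>E. \<exists>u v. e = {u, v} \<and> u \<in> V \<and> v \<in> V \<and> u \<noteq> v)"

definition adj :: "'a set set \<Rightarrow> 'a \<Rightarrow> 'a \<Rightarrow> bool" where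
  "adj E u v \<longleftrightarrow> u \<noteq> v \<and> {u, v} \<in> E"

definition connected_graph :: "'a set \<Rightarrow> 'a set set \<Rightarrow> bool" where
  "connected_graph V E \<longleftrightarrow> (\<forall>u\<in>V. \<forall>v\<in>V. (adj E)\<^sup>*\<^sup>* u v)"

definition is_cycle :: "'a set set \<Rightarrow> 'a list \<Rightarrow> bool" where
  "is_cycle E xs \<longleftrightarrow> length xs \<ge> 3 \<and> distinct xs
     \<and> (\<forall>i. Suc i < length xs \<longrightarrow> adj E (xs ! i) (xs ! Suc i))
     \<and> adj E (last xs) (hd xs)"

definition is_tree :: "'a set \<Rightarrow> 'a set set \<Rightarrow> bool" where
  "is_tree V E \<longleftrightarrow> simple_graph V E \<and> V \<noteq> {} \<and> connected_graph V E \<and> (\<nexists>xs. is_cycle E xs)"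

definition degree :: "'a set set \<Rightarrow> 'a \<Rightarrow> nat" where
  "degree E v = card {e \<in> E. v \<in> e}"

definition pendant :: "'a set set \<Rightarrow> 'a \<Rightarrow> bool" where
  "pendant E v \<longleftrightarrow> degree E v = 1"

definition pendant_edge :: "'a set set \<Rightarrow> 'a set \<Rightarrow> bool" where
  "pendant_edge E e \<longleftrightarrow> e \<in> E \<and> (\<exists>v\<in>e. pendant E v)"

definition matching :: "'a set set \<Rightarrow> 'a set set \<Rightarrow> bool" where
  "matching E M \<longleftrightarrow> M \<subseteq> E \<and> (\<forall>e1\<in>M. \<forall>e2\<in>M. e1 \<noteq> e2 \<longrightarrow> e1 \<inter> e2 = {})"

definition maximum_matching :: "'a set set \<Rightarrow> 'a set set \<Rightarrow> bool" where
  "maximum_matching E M \<longleftrightarrow> matching E M \<and> (\<forall>M'. matching E M' \<longrightarrow> card M' \<le> card M)"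

definition classT :: "'a set \<Rightarrow> 'a set set \<Rightarrow> ('a set \<Rightarrow> real) \<Rightarrow> bool" where
  "classT V E w \<longleftrightarrow> is_tree V E \<and> (\<forall>e\<in>E. w e \<noteq> 0)
     \<and> (\<exists>v\<in>V. \<not> pendant E v)
     \<and> (\<forall>v\<in>V. \<not> pendant E v \<longrightarrow> (\<exists>u\<in>V. adj E v u \<and> pendant E u))"

end

theory Submission
  imports Defs
begin

text \<open>If both ends \<open>u\<close>, \<open>v\<close> of a matched edge are non-pendant, each has a pendant neighbour
  (\<open>u'\<close> resp. \<open>v'\<close>). These are distinct and left uncovered by the matching, since their only
  edges meet \<open>{u, v}\<close>. Hence \<open>u' u v v'\<close> is an augmenting path, and swapping its edges gives a
  larger matching. Neither acyclicity nor the weights play a role.\<close>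

lemma simple_graph_finite_edges:
  assumes "simple_graph V E"
  shows "finite E"
proof -
  have "E \<subseteq> Pow V" using assms by (auto simp: simple_graph_def)
  moreover have "finite (Pow V)" using assms by (simp add: simple_graph_def)
  ultimately show ?thesis by (rule finite_subset)
qed

lemma pendant_incident_edge_unique:
  assumes "pendant E x" "f \<in> E" "x \<in> f" "g \<in> E" "x \<in> g"
  shows "f = g"
proof -
  have "card {e \<in> E. x \<in> e} = 1" using assms(1) by (simp add: pendant_def degree_def)
  then obtain h where "{e \<in> E. x \<in> e} = {h}" by (rule card_1_singletonE)
  moreover have "f \<in> {e \<in> E. x \<in> e}" "g \<in> {e \<in> E. x \<in> e}" using assms(2-5) by simp_all
  ultimately show ?thesis by simp
qed

lemma matching_edges_meet_eq:
  assumes "matching E M" "f \<in> M" "g \<in> M" "x \<in> f" "x \<in> g"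
  shows "f = g"
  using assms unfolding matching_def by blast

lemma matching_subset:
  assumes "matching E M" "M' \<subseteq> M"
  shows "matching E M'"
  using assms unfolding matching_def by blast

lemma matching_insert:
  assumes "matching E M" "f \<in> E" "f \<inter> \<Union>M = {}"
  shows "matching E (insert f M)"
  using assms unfolding matching_def by blast

lemma matching_remove_edge_uncovers:
  assumes "matching E M" "f \<in> M"
  shows "f \<inter> \<Union>(M - {f}) = {}"
  using assms unfolding matching_def by blast

lemma pendant_neighbour_uncovered:
  assumes "matching E M" "{u, v} \<in> M"
    and "pendant E x" "{x, u} \<in> E" "x \<noteq> u" "x \<noteq> v"
  shows "x \<notin> \<Union>M"
proof
  assume "x \<in> \<Union>M"
  then obtain f where f: "f \<in> M" "x \<in> f" by (rule UnionE)
  then have "f \<in> E" using assms(1) by (auto simp: matching_def)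
  then have "f = {x, u}" by (rule pendant_incident_edge_unique[OF assms(3) _ f(2) assms(4) insertI1])
  then have "f = {u, v}" using matching_edges_meet_eq[OF assms(1) f(1) assms(2), of u] by simp
  then show False using f(2) assms(5,6) by simp
qed

lemma augmenting_path3_not_maximum_matching:
  assumes "finite E" "matching E M" "{u, v} \<in> M" "u \<noteq> v"
    and "{u', u} \<in> E" "{v, v'} \<in> E" "u' \<notin> \<Union>M" "v' \<notin> \<Union>M" "u' \<noteq> v'"
  shows "\<not> maximum_matching E M"
proof
  assume "maximum_matching E M"
  define M0 where "M0 = M - {{u, v}}"
  have "u' \<noteq> v" "v' \<noteq> u" using assms(3,7,8) by auto
  have M0: "matching E M0" "u \<notin> \<Union>M0" "v \<notin> \<Union>M0" "u' \<notin> \<Union>M0" "v' \<notin> \<Union>M0"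
    using matching_subset[OF assms(2)] matching_remove_edge_uncovers[OF assms(2,3)] assms(7,8)
    unfolding M0_def by auto
  then have "matching E (insert {v, v'} M0)"
    using assms(6) by (intro matching_insert) auto
  then have "matching E (insert {u', u} (insert {v, v'} M0))"
    using assms(4,5,6) M0 \<open>u' \<noteq> v\<close> \<open>v' \<noteq> u\<close> \<open>u' \<noteq> v'\<close> by (intro matching_insert) auto
  moreover have "card (insert {u', u} (insert {v, v'} M0)) = Suc (card M)"
  proof -
    have "finite M" using assms(1,2) finite_subset by (auto simp: matching_def)
    moreover have "{v, v'} \<notin> M0" "{u', u} \<notin> insert {v, v'} M0"
      using M0(3,4) \<open>u' \<noteq> v\<close> \<open>u' \<noteq> v'\<close> by (auto simp: doubleton_eq_iff)
    ultimately show ?thesis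
      using card.remove[OF _ assms(3)] by (simp add: M0_def)
  qed
  ultimately show False
    using \<open>maximum_matching E M\<close> by (metis Suc_n_not_le_n maximum_matching_def)
qed

lemma pendant_neighbours_not_maximum_matching:
  assumes "finite E" "matching E M" "{u, v} \<in> M" "u \<noteq> v"
    and u': "pendant E u'" "{u', u} \<in> E" "u' \<notin> {u, v}"
    and v': "pendant E v'" "{v', v} \<in> E" "v' \<notin> {u, v}"
  shows "\<not> maximum_matching E M"
proof -
  have "u' \<noteq> v'"
  proof
    assume "u' = v'"
    then have "{u', u} = {u', v}"
      using pendant_incident_edge_unique[OF u'(1,2) insertI1] v'(2) by simp
    then show False using assms(4) u'(3) by (simp add: doubleton_eq_iff)
  qed
  moreover have "{v, u} \<in> M" using assms(3) by (simp add: insert_commute)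
  then have "u' \<notin> \<Union>M" "v' \<notin> \<Union>M"
    using pendant_neighbour_uncovered[OF assms(2,3) u'(1,2)] u'(3)
      pendant_neighbour_uncovered[OF assms(2) _ v'(1,2)] v'(3) by auto
  moreover have "{v, v'} \<in> E" using v'(2) by (simp add: insert_commute)
  ultimately show ?thesis
    using augmenting_path3_not_maximum_matching[OF assms(1-4) u'(2)] by blast
qed

theorem theorem3p3:
  fixes V :: "'a set" and E :: "'a set set" and w :: "'a set \<Rightarrow> real"
  assumes "classT V E w"
    and "e \<in> E" and "\<not> pendant_edge E e"
    and "maximum_matching E M"
  shows "e \<notin> M"
proof
  assume "e \<in> M"
  have G: "simple_graph V E"
    and pendant_nb: "\<And>v. v \<in> V \<Longrightarrow> \<not> pendant E v \<Longrightarrow> \<exists>u\<in>V. adj E v u \<and> pendant E u"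
    using assms(1) by (auto simp: classT_def is_tree_def)
  obtain u v where e: "e = {u, v}" "u \<in> V" "v \<in> V" "u \<noteq> v"
    using G assms(2) unfolding simple_graph_def by blast
  have "\<not> pendant E u" "\<not> pendant E v" using assms(2,3) e(1) by (auto simp: pendant_edge_def)
  then obtain u' v' where
    u': "pendant E u'" "{u', u} \<in> E" "u' \<notin> {u, v}" and
    v': "pendant E v'" "{v', v} \<in> E" "v' \<notin> {u, v}"
    using pendant_nb[OF e(2)] pendant_nb[OF e(3)] by (auto simp: adj_def insert_commute)
  moreover have "matching E M" using assms(4) by (simp add: maximum_matching_def)
  ultimately show False
    using pendant_neighbours_not_maximum_matching[OF simple_graph_finite_edges[OF G]]
      \<open>e \<in> M\<close> e(1,4) assms(4) by blast
qed

end
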